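(* Let $P_{II*}=P_{II}$. For a filter $\Xi\in P_{III*}$, $\mathcal C_{\Xi\text{-unc}}\neq\emptyset$ if and only if $\Xi=\uparrow\{\wedge\Xi\}$ and $\overline\Xi=\downarrow\{\vee\overline\Xi\}$, where $\uparrow\{\boldsymbol\zeta\}=\{\boldsymbol\upsilon\in P_{II}:\boldsymbol\zeta\subseteq\boldsymbol\upsilon\}$ and $\downarrow\{S\}=\{\boldsymbol\upsilon\in P_{II}:\boldsymbol\upsilon\subseteq S\}$.
   Context: Let $n\ge1$, $L=\{1,\dots,n\}$, and for $i\in L$ let $\mathcal H_i$ be a Hilbert space with $1<\dim\mathcal H_i<\infty$; $\mathcal H_X=\bigotimes_{i\in X}\mathcal H_i$ and $\mathcal D_X$ is the set of density operators on $\mathcal H_X$. $P_I$ is the set of partitions of $L$ ordered by refinement. For $\xi\in P_I$, $\mathcal D_{\xi\text{-unc}}=\{\varrho\in\mathcal D_L:\varrho=\bigotimes_{X\in\xi}\varrho_X,\ \varrho_X\in\mathcal D_X\}$, and for $S\subseteq P_I$, $\mathcal D_{S\text{-unc}}=\bigcup_{\xi\in S}\mathcal D_{\xi\text{-unc}}$. $P_{II}$ is the set of nonempty down-sets of $P_I$, ordered by inclusion; $P_{III*}$ is the set of nonempty up-sets of $P_{II*}$. For $\Xi\in P_{III*}$: $\overline\Xi=P_{II*}\setminus\Xi$, $\wedge\Xi=\bigcap_{\boldsymbol\xi\in\Xi}\boldsymbol\xi$, $\vee\overline\Xi=\bigcup_{\boldsymbol\xi'\in\overline\Xi}\boldsymbol\xi'$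 ($\emptyset$ if $\overline\Xi=\emptyset$), and $\mathcal C_{\Xi\text{-unc}}=\bigcap_{\boldsymbol\xi'\in\overline\Xi}(\mathcal D_L\setminus\mathcal D_{\boldsymbol\xi'\text{-unc}})\cap\bigcap_{\boldsymbol\xi\in\Xi}\mathcal D_{\boldsymbol\xi\text{-unc}}$. *)

theory Defs
  imports "HOL-Analysis.Analysis" "HOL-Library.Complex_Order" "HOL-Library.Disjoint_Sets"
begin

text \<open>Concrete model: subsystem i has Hilbert space C^(d i); a basis state of H_X
  is a configuration a in PiE X (lambda i. {..<d i}); an operator on H_X is a
  complex kernel on pairs of configurations (zero outside).\<close>

definition cfg :: "(nat \<Rightarrow> nat) \<Rightarrow> nat set \<Rightarrow> (nat \<Rightarrow> nat) set" where
  "cfg d X = PiE X (\<lambda>i. {..<d i})"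

type_synonym op = "(nat \<Rightarrow> nat) \<Rightarrow> (nat \<Rightarrow> nat) \<Rightarrow> complex"

definition is_density :: "(nat \<Rightarrow> nat) \<Rightarrow> nat set \<Rightarrow> op \<Rightarrow> bool" where
  "is_density d X \<rho> \<longleftrightarrow>
     (\<forall>a b. (a \<notin> cfg d X \<or> b \<notin> cfg d X) \<longrightarrow> \<rho> a b = 0) \<and>
     (\<forall>v :: (nat \<Rightarrow> nat) \<Rightarrow> complex.
        0 \<le> (\<Sum>a\<in>cfg d X. \<Sum>b\<in>cfg d X. cnj (v a) * \<rho> a b * v b)) \<and>
     (\<Sum>a\<in>cfg d X. \<rho> a a) = 1"

definition Dens :: "(nat \<Rightarrow> nat) \<Rightarrow> nat set \<Rightarrow> op set" where
  "Dens d X = {\<rho>. is_density d X \<rho>}"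

definition Lset :: "nat \<Rightarrow> nat set" where
  "Lset n = {1..n}"

definition PI :: "nat \<Rightarrow> nat set set set" where
  "PI n = {\<xi>. partition_on (Lset n) \<xi>}"

definition refines :: "nat set set \<Rightarrow> nat set set \<Rightarrow> bool" where
  "refines \<xi> \<eta> \<longleftrightarrow> (\<forall>X\<in>\<xi>. \<exists>Y\<in>\<eta>. X \<subseteq> Y)"

definition PII :: "nat \<Rightarrow> nat set set set set" where
  "PII n = {S. S \<subseteq> PI n \<and> S \<noteq> {} \<and>
               (\<forall>\<eta>\<in>S. \<forall>\<xi>\<in>PI n. refines \<xi> \<eta> \<longrightarrow> \<xi> \<in> S)}"

definition PIII :: "nat \<Rightarrow> nat set set set set set" where
  "PIII n = {\<Xi>. \<Xi> \<subseteq> PII n \<and> \<Xi> \<noteq> {} \<and>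
               (\<forall>S\<in>\<Xi>. \<forall>T\<in>PII n. S \<subseteq> T \<longrightarrow> T \<in> \<Xi>)}"

definition unc :: "(nat \<Rightarrow> nat) \<Rightarrow> nat \<Rightarrow> nat set set \<Rightarrow> op set" where
  "unc d n \<xi> = {\<rho> \<in> Dens d (Lset n). \<exists>\<rho>s. (\<forall>X\<in>\<xi>. \<rho>s X \<in> Dens d X) \<and>
      (\<forall>a b. \<rho> a b = (if a \<in> cfg d (Lset n) \<and> b \<in> cfg d (Lset n)
                       then (\<Prod>X\<in>\<xi>. \<rho>s X (restrict a X) (restrict b X)) else 0))}"

definition Sunc :: "(nat \<Rightarrow> nat) \<Rightarrow> nat \<Rightarrow> nat set set set \<Rightarrow> op set" where
  "Sunc d n S = (\<Union>\<xi>\<in>S. unc d n \<xi>)"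

definition Cunc :: "(nat \<Rightarrow> nat) \<Rightarrow> nat \<Rightarrow> nat set set set set \<Rightarrow> op set" where
  "Cunc d n \<Xi> = (\<Inter>S'\<in>PII n - \<Xi>. Dens d (Lset n) - Sunc d n S')
                 \<inter> (\<Inter>S\<in>\<Xi>. Sunc d n S)"

end

theory Submission
  imports Defs
begin

text \<open>For a fixed state \<open>\<rho>\<close>, the partitions \<open>\<xi>\<close> for which \<open>\<rho>\<close> is \<open>\<xi>\<close>-uncorrelated are
  closed under meets: normalizing by a nonzero diagonal entry \<open>\<rho> e e\<close>, \<open>\<xi>\<close>-uncorrelatedness
  says that the matrix factorizes through the slices of \<open>\<rho>\<close> at \<open>e\<close> along the blocks of \<open>\<xi>\<close>,
  and two such factorizations combine into one along the intersections of blocks. Hence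
  every state has a finest such partition \<open>\<mu>\<close>, and \<open>\<rho> \<in> \<D>\<^sub>S\<close> exactly when \<open>\<mu> \<in> S\<close>.
  So if \<open>\<C>\<^sub>\<Xi>\<close> contains \<open>\<rho>\<close>, then \<open>\<Xi>\<close> is the set of down-sets containing \<open>\<mu>\<close>, which is
  equivalent to the two order-theoretic conditions. Conversely, the tensor product of GHZ
  states on the blocks of \<open>\<mu>\<close> is uncorrelated exactly for the coarsenings of \<open>\<mu>\<close>, so it lies
  in \<open>\<C>\<^sub>\<Xi>\<close> for that \<open>\<Xi>\<close>.\<close>

lemma partition_on_block_eq:
  "partition_on L \<xi> \<Longrightarrow> X \<in> \<xi> \<Longrightarrow> Y \<in> \<xi> \<Longrightarrow> i \<in> X \<Longrightarrow> i \<in> Y \<Longrightarrow> X = Y"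
  by (metis disjnt_iff pairwise_def partition_onD2)

lemma partition_on_block_subset: "partition_on L \<xi> \<Longrightarrow> X \<in> \<xi> \<Longrightarrow> X \<subseteq> L"
  using partition_onD1 by blast

lemma partition_on_block_nonempty: "partition_on L \<xi> \<Longrightarrow> X \<in> \<xi> \<Longrightarrow> X \<noteq> {}"
  using partition_onD3 by blast

definition block_of :: "'a set set \<Rightarrow> 'a \<Rightarrow> 'a set" where
  "block_of \<xi> i = (THE Z. Z \<in> \<xi> \<and> i \<in> Z)"

lemma block_of_eq:
  assumes "partition_on L \<xi>" "Z \<in> \<xi>" "i \<in> Z"
  shows "block_of \<xi> i = Z"
  unfolding block_of_def
  by (rule the_equality) (use assms partition_on_block_eq[OF assms(1)] in auto)

lemma block_of:
  assumes "partition_on L \<xi>" "i \<in> L"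
  shows "block_of \<xi> i \<in> \<xi>" and "i \<in> block_of \<xi> i"
proof -
  obtain Z where "Z \<in> \<xi>" "i \<in> Z"
    using assms partition_onD1 by blast
  with block_of_eq[OF assms(1)] show "block_of \<xi> i \<in> \<xi>" "i \<in> block_of \<xi> i"
    by auto
qed

lemma finite_cfg: "finite X \<Longrightarrow> finite (cfg d X)"
  unfolding cfg_def by (rule finite_PiE) auto

lemma restrict_cfg: "a \<in> cfg d L \<Longrightarrow> X \<subseteq> L \<Longrightarrow> restrict a X \<in> cfg d X"
  unfolding cfg_def by auto

lemma bij_betw_restrict_blocks:
  assumes P: "partition_on L \<zeta>"
  shows "bij_betw (\<lambda>a. \<lambda>Z\<in>\<zeta>. restrict a Z) (cfg d L) (PiE \<zeta> (cfg d))"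
proof (rule bij_betw_byWitness[where f' = "\<lambda>g. \<lambda>i\<in>L. g (block_of \<zeta> i) i"])
  show "\<forall>a\<in>cfg d L. (\<lambda>i\<in>L. (\<lambda>Z\<in>\<zeta>. restrict a Z) (block_of \<zeta> i) i) = a"
  proof
    fix a assume a: "a \<in> cfg d L"
    show "(\<lambda>i\<in>L. (\<lambda>Z\<in>\<zeta>. restrict a Z) (block_of \<zeta> i) i) = a"
    proof
      fix i
      show "(\<lambda>i\<in>L. (\<lambda>Z\<in>\<zeta>. restrict a Z) (block_of \<zeta> i) i) i = a i"
        using block_of[OF P, of i] PiE_arb[OF a[unfolded cfg_def], of i] by (cases "i \<in> L") simp_all
    qed
  qed
  show "\<forall>g\<in>PiE \<zeta> (cfg d). (\<lambda>Z\<in>\<zeta>. restrict (\<lambda>i\<in>L. g (block_of \<zeta> i) i) Z) = g"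
  proof
    fix g assume g: "g \<in> PiE \<zeta> (cfg d)"
    have "restrict (\<lambda>i\<in>L. g (block_of \<zeta> i) i) Z = g Z" if Z: "Z \<in> \<zeta>" for Z
    proof
      fix i
      have "g Z \<in> cfg d Z" using g Z by blast
      then show "restrict (\<lambda>i\<in>L. g (block_of \<zeta> i) i) Z i = g Z i"
        using partition_on_block_subset[OF P Z] block_of_eq[OF P Z, of i] PiE_arb[of "g Z" Z _ i]
        unfolding cfg_def by (cases "i \<in> Z") auto
    qed
    moreover have "g Z = undefined" if "Z \<notin> \<zeta>" for Z
      using g that by (rule PiE_arb)
    ultimately show "(\<lambda>Z\<in>\<zeta>. restrict (\<lambda>i\<in>L. g (block_of \<zeta> i) i) Z) = g"
      by (auto simp: fun_eq_iff)
  qed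
  show "(\<lambda>a. \<lambda>Z\<in>\<zeta>. restrict a Z) ` cfg d L \<subseteq> PiE \<zeta> (cfg d)"
  proof clarify
    fix a assume a: "a \<in> cfg d L"
    show "(\<lambda>Z\<in>\<zeta>. restrict a Z) \<in> PiE \<zeta> (cfg d)"
      using restrict_cfg[OF a] partition_on_block_subset[OF P] by auto
  qed
  show "(\<lambda>g. \<lambda>i\<in>L. g (block_of \<zeta> i) i) ` PiE \<zeta> (cfg d) \<subseteq> cfg d L"
  proof clarify
    fix g assume g: "g \<in> PiE \<zeta> (cfg d)"
    have "g (block_of \<zeta> i) i < d i" if "i \<in> L" for i
      using g block_of[OF P that] unfolding cfg_def by blast
    then show "(\<lambda>i\<in>L. g (block_of \<zeta> i) i) \<in> cfg d L"
      unfolding cfg_def by auto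
  qed
qed

lemma sum_cfg_prod_blocks:
  fixes h :: "nat set \<Rightarrow> (nat \<Rightarrow> nat) \<Rightarrow> 'c::comm_semiring_1"
  assumes P: "partition_on L \<zeta>" and "finite L"
  shows "(\<Sum>a\<in>cfg d L. \<Prod>Z\<in>\<zeta>. h Z (restrict a Z)) = (\<Prod>Z\<in>\<zeta>. \<Sum>b\<in>cfg d Z. h Z b)"
proof -
  have "finite \<zeta>" using finite_elements[OF assms(2) P] .
  moreover have "finite (cfg d Z)" if "Z \<in> \<zeta>" for Z
    using finite_cfg finite_subset partition_on_block_subset[OF P that] assms(2) by blast
  ultimately have "(\<Prod>Z\<in>\<zeta>. \<Sum>b\<in>cfg d Z. h Z b) = (\<Sum>g\<in>PiE \<zeta> (cfg d). \<Prod>Z\<in>\<zeta>. h Z (g Z))"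
    by (rule prod_sum_PiE)
  also have "\<dots> = (\<Sum>a\<in>cfg d L. \<Prod>Z\<in>\<zeta>. h Z ((\<lambda>Z\<in>\<zeta>. restrict a Z) Z))"
    by (rule sum.reindex_bij_betw[OF bij_betw_restrict_blocks[OF P], symmetric])
  also have "\<dots> = (\<Sum>a\<in>cfg d L. \<Prod>Z\<in>\<zeta>. h Z (restrict a Z))"
    by (intro sum.cong prod.cong) auto
  finally show ?thesis ..
qed

definition meet :: "'a set set \<Rightarrow> 'a set set \<Rightarrow> 'a set set" where
  "meet \<xi> \<eta> = (\<lambda>(X, Y). X \<inter> Y) ` (\<xi> \<times> \<eta>) - {{}}"

lemma partition_on_meet:
  assumes P: "partition_on L \<xi>" and Q: "partition_on L \<eta>"
  shows "partition_on L (meet \<xi> \<eta>)"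
proof (rule partition_onI)
  show "\<Union>(meet \<xi> \<eta>) = L"
  proof
    show "\<Union>(meet \<xi> \<eta>) \<subseteq> L"
      unfolding meet_def using partition_on_block_subset[OF P] by blast
    show "L \<subseteq> \<Union>(meet \<xi> \<eta>)"
    proof
      fix i assume "i \<in> L"
      then obtain X Y where "X \<in> \<xi>" "Y \<in> \<eta>" "i \<in> X" "i \<in> Y"
        using P Q partition_onD1 by blast
      then show "i \<in> \<Union>(meet \<xi> \<eta>)" unfolding meet_def by blast
    qed
  qed
  show "{} \<notin> meet \<xi> \<eta>" unfolding meet_def by blast
next
  fix p q assume p: "p \<in> meet \<xi> \<eta>" and q: "q \<in> meet \<xi> \<eta>" and "p \<noteq> q"
  obtain X Y where XY: "X \<in> \<xi>" "Y \<in> \<eta>" "p = X \<inter> Y" using p unfolding meet_def by blast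
  obtain X' Y' where XY': "X' \<in> \<xi>" "Y' \<in> \<eta>" "q = X' \<inter> Y'" using q unfolding meet_def by blast
  have "X = X' \<and> Y = Y'" if "i \<in> p" "i \<in> q" for i
    using partition_on_block_eq[OF P XY(1) XY'(1)] partition_on_block_eq[OF Q XY(2) XY'(2)]
      that XY XY' by blast
  then show "disjnt p q" using \<open>p \<noteq> q\<close> XY XY' by (auto simp: disjnt_def)
qed

lemma meet_refines: "refines (meet \<xi> \<eta>) \<xi>" "refines (meet \<xi> \<eta>) \<eta>"
  unfolding refines_def meet_def by auto

lemma prod_meet:
  fixes F :: "'a set \<Rightarrow> 'b::comm_monoid_mult"
  assumes P: "partition_on L \<xi>" and Q: "partition_on L \<eta>" and "finite \<xi>" "finite \<eta>"
    and F_empty: "F {} = 1"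
  shows "(\<Prod>X\<in>\<xi>. \<Prod>Y\<in>\<eta>. F (X \<inter> Y)) = prod F (meet \<xi> \<eta>)"
proof -
  let ?cap = "\<lambda>(X, Y). X \<inter> Y"
  have fin: "finite (\<xi> \<times> \<eta>)" using assms by simp
  have "(\<Prod>X\<in>\<xi>. \<Prod>Y\<in>\<eta>. F (X \<inter> Y)) = prod (F \<circ> ?cap) (\<xi> \<times> \<eta>)"
    by (simp add: prod.cartesian_product case_prod_unfold comp_def)
  also have "\<dots> = prod F (?cap ` (\<xi> \<times> \<eta>))"
  proof (rule prod.reindex_nontrivial[OF fin, symmetric])
    fix p q assume "p \<in> \<xi> \<times> \<eta>" "q \<in> \<xi> \<times> \<eta>" "p \<noteq> q" "?cap p = ?cap q"
    then obtain X Y X' Y' where XY: "p = (X, Y)" "q = (X', Y')" "X \<in> \<xi>" "Y \<in> \<eta>" "X' \<in> \<xi>" "Y' \<in> \<eta>"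
      and cap: "X \<inter> Y = X' \<inter> Y'" and ne: "(X, Y) \<noteq> (X', Y')" by auto
    have "X \<inter> Y = {}"
    proof (rule ccontr)
      assume "X \<inter> Y \<noteq> {}"
      then obtain i where "i \<in> X \<inter> Y" "i \<in> X' \<inter> Y'" using cap by blast
      then have "X = X'" "Y = Y'"
        using partition_on_block_eq[OF P XY(3,5)] partition_on_block_eq[OF Q XY(4,6)] by auto
      with ne show False by simp
    qed
    then show "F (?cap p) = 1" using F_empty XY by simp
  qed
  also have "\<dots> = prod F (meet \<xi> \<eta>)"
    unfolding meet_def using fin F_empty by (intro prod.mono_neutral_right) auto
  finally show ?thesis .
qed

lemma refines_refl: "refines \<xi> \<xi>"
  unfolding refines_def by blast

lemma refines_trans: "refines \<xi> \<eta> \<Longrightarrow> refines \<eta> \<zeta> \<Longrightarrow> refines \<xi> \<zeta>"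
  unfolding refines_def by (meson order_trans)

definition principal_down :: "nat \<Rightarrow> nat set set \<Rightarrow> nat set set set" where
  "principal_down n \<mu> = {\<xi> \<in> PI n. refines \<xi> \<mu>}"

lemma principal_down_PII: "\<mu> \<in> PI n \<Longrightarrow> principal_down n \<mu> \<in> PII n"
  unfolding PII_def principal_down_def using refines_refl refines_trans by blast

lemma principal_down_self: "\<mu> \<in> PI n \<Longrightarrow> \<mu> \<in> principal_down n \<mu>"
  unfolding principal_down_def using refines_refl by blast

lemma principal_down_subset: "S \<in> PII n \<Longrightarrow> \<mu> \<in> S \<Longrightarrow> principal_down n \<mu> \<subseteq> S"
  unfolding PII_def principal_down_def by blast

definition discrete_partition :: "nat \<Rightarrow> nat set set" where
  "discrete_partition n = (\<lambda>i. {i}) ` Lset n"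

lemma discrete_partition_PI: "discrete_partition n \<in> PI n"
  unfolding PI_def discrete_partition_def by (simp add: partition_on_singletons)

lemma discrete_partition_refines: "\<xi> \<in> PI n \<Longrightarrow> refines (discrete_partition n) \<xi>"
  unfolding refines_def discrete_partition_def PI_def using partition_onD1 by fastforce

lemma discrete_partition_mem_PII: "S \<in> PII n \<Longrightarrow> discrete_partition n \<in> S"
  unfolding PII_def using discrete_partition_refines discrete_partition_PI by blast

lemma Inter_mem_PII:
  assumes "\<Xi> \<subseteq> PII n" "\<Xi> \<noteq> {}"
  shows "\<Inter>\<Xi> \<in> PII n"
proof -
  have "\<forall>S\<in>\<Xi>. S \<subseteq> PI n \<and> (\<forall>\<eta>\<in>S. \<forall>\<xi>\<in>PI n. refines \<xi> \<eta> \<longrightarrow> \<xi> \<in> S)"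
    using assms(1) unfolding PII_def by blast
  moreover have "discrete_partition n \<in> \<Inter>\<Xi>"
    using assms(1) discrete_partition_mem_PII by blast
  ultimately show ?thesis
    using assms(2) unfolding PII_def by blast
qed

definition downsets_containing :: "nat \<Rightarrow> nat set set \<Rightarrow> nat set set set set" where
  "downsets_containing n \<mu> = {S \<in> PII n. \<mu> \<in> S}"

lemma downsets_containing_imp_filter_conditions:
  assumes "\<mu> \<in> PI n" and \<Xi>: "\<Xi> = downsets_containing n \<mu>"
  shows "\<Xi> = {U \<in> PII n. \<Inter>\<Xi> \<subseteq> U} \<and> PII n - \<Xi> = {U \<in> PII n. U \<subseteq> \<Union>(PII n - \<Xi>)}"
proof
  have mem: "S \<in> \<Xi> \<longleftrightarrow> S \<in> PII n \<and> \<mu> \<in> S" for S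
    using \<Xi> unfolding downsets_containing_def by blast
  have "\<Inter>\<Xi> = principal_down n \<mu>"
  proof
    show "\<Inter>\<Xi> \<subseteq> principal_down n \<mu>"
      using mem principal_down_PII[OF assms(1)] principal_down_self[OF assms(1)] by blast
    show "principal_down n \<mu> \<subseteq> \<Inter>\<Xi>"
      using mem principal_down_subset by blast
  qed
  then show "\<Xi> = {U \<in> PII n. \<Inter>\<Xi> \<subseteq> U}"
    using mem principal_down_subset principal_down_self[OF assms(1)] by blast
  show "PII n - \<Xi> = {U \<in> PII n. U \<subseteq> \<Union>(PII n - \<Xi>)}"
    using mem by blast
qed

text \<open>The meet \<open>\<Inter>\<Xi>\<close> lies in \<open>\<Xi>\<close>. Either it is a principal down-set, whose generator
  then determines \<open>\<Xi>\<close>, or each of its elements generates a principal down-set outside \<open>\<Xi>\<close>,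
  and then the second condition puts \<open>\<Inter>\<Xi>\<close> itself outside \<open>\<Xi>\<close>.\<close>
lemma filter_conditions_imp_downsets_containing:
  assumes X: "\<Xi> \<in> PIII n"
    and up: "\<Xi> = {U \<in> PII n. \<Inter>\<Xi> \<subseteq> U}"
    and down: "PII n - \<Xi> = {U \<in> PII n. U \<subseteq> \<Union>(PII n - \<Xi>)}"
  shows "\<exists>\<mu>\<in>PI n. \<Xi> = downsets_containing n \<mu>"
proof -
  define Z where "Z = \<Inter>\<Xi>"
  have XP: "\<Xi> \<subseteq> PII n" and "\<Xi> \<noteq> {}" using X PIII_def by auto
  then have Z: "Z \<in> PII n" unfolding Z_def by (rule Inter_mem_PII)
  have mem: "S \<in> \<Xi> \<longleftrightarrow> S \<in> PII n \<and> Z \<subseteq> S" for S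
    using up unfolding Z_def by blast
  have ZPI: "Z \<subseteq> PI n" using Z unfolding PII_def by blast
  show ?thesis
  proof (cases "\<exists>\<mu>\<in>Z. Z \<subseteq> principal_down n \<mu>")
    case True
    then obtain \<mu> where \<mu>: "\<mu> \<in> Z" "Z \<subseteq> principal_down n \<mu>" by blast
    have "Z \<subseteq> S \<longleftrightarrow> \<mu> \<in> S" if "S \<in> PII n" for S
      using \<mu> principal_down_subset[OF that] by blast
    then have "\<Xi> = downsets_containing n \<mu>"
      using mem unfolding downsets_containing_def by blast
    with \<mu>(1) ZPI show ?thesis by blast
  next
    case False
    have "Z \<subseteq> \<Union>(PII n - \<Xi>)"
    proof
      fix \<xi> assume "\<xi> \<in> Z"
      then have "\<xi> \<in> PI n" "\<not> Z \<subseteq> principal_down n \<xi>"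
        using False ZPI by blast+
      then show "\<xi> \<in> \<Union>(PII n - \<Xi>)"
        using mem principal_down_PII principal_down_self by blast
    qed
    then have "Z \<in> PII n - \<Xi>" using down Z by blast
    moreover have "Z \<in> \<Xi>" using mem Z by blast
    ultimately show ?thesis by blast
  qed
qed

lemma override_on_cfg:
  assumes "Z \<subseteq> L" "\<And>i. i \<in> Z \<Longrightarrow> a i < d i" "e \<in> cfg d L"
  shows "override_on e a Z \<in> cfg d L"
proof -
  have "e i = undefined" if "i \<notin> L" for i
    using assms(3) that unfolding cfg_def by (rule PiE_arb)
  then show ?thesis
    using assms unfolding cfg_def override_on_def by (auto simp: PiE_iff extensional_def)
qed

lemma override_on_cfg_cfg: "a \<in> cfg d L \<Longrightarrow> e \<in> cfg d L \<Longrightarrow> Z \<subseteq> L \<Longrightarrow> override_on e a Z \<in> cfg d L"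
  by (rule override_on_cfg) (auto simp: cfg_def)

lemma override_on_cfg_sub: "a \<in> cfg d Z \<Longrightarrow> e \<in> cfg d L \<Longrightarrow> Z \<subseteq> L \<Longrightarrow> override_on e a Z \<in> cfg d L"
  by (rule override_on_cfg) (auto simp: cfg_def)

lemma restrict_override_on: "restrict (override_on e a A) A = restrict a A"
  by (auto simp: fun_eq_iff)

lemma restrict_override_on_disjoint: "Y \<inter> A = {} \<Longrightarrow> restrict (override_on e a A) Y = restrict e Y"
  by (auto simp: fun_eq_iff override_on_def)

lemma override_on_override_on: "override_on e (override_on e a X) Y = override_on e a (X \<inter> Y)"
  by (auto simp: fun_eq_iff override_on_def)

lemma override_on_restrict: "override_on e (restrict a Z) Z = override_on e a Z"
  by (auto simp: fun_eq_iff override_on_def)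

lemma override_on_self: "override_on e e Z = e"
  by (auto simp: fun_eq_iff override_on_def)

lemma psd_form_reindex:
  fixes K :: "'a \<Rightarrow> 'a \<Rightarrow> complex" and f :: "'b \<Rightarrow> 'a"
  assumes "finite T" "f ` S \<subseteq> T" "inj_on f S"
    and psd: "\<And>w. 0 \<le> (\<Sum>x\<in>T. \<Sum>y\<in>T. cnj (w x) * K x y * w y)"
  shows "0 \<le> (\<Sum>a\<in>S. \<Sum>b\<in>S. cnj (v a) * K (f a) (f b) * v b)"
proof -
  define w where "w x = (if x \<in> f ` S then v (inv_into S f x) else 0)" for x
  have wf: "w (f a) = v a" if "a \<in> S" for a
    unfolding w_def using assms(3) that by auto
  have "(\<Sum>x\<in>T. \<Sum>y\<in>T. cnj (w x) * K x y * w y) = (\<Sum>x\<in>f ` S. \<Sum>y\<in>T. cnj (w x) * K x y * w y)"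
    using assms(1,2) by (intro sum.mono_neutral_right) (auto simp: w_def)
  also have "\<dots> = (\<Sum>x\<in>f ` S. \<Sum>y\<in>f ` S. cnj (w x) * K x y * w y)"
    using assms(1,2) by (intro sum.cong[OF refl] sum.mono_neutral_right) (auto simp: w_def)
  also have "\<dots> = (\<Sum>a\<in>S. \<Sum>b\<in>S. cnj (v a) * K (f a) (f b) * v b)"
    using assms(3) by (simp add: sum.reindex wf)
  finally show ?thesis using psd[of w] by simp
qed

lemma psd_form_diag_nonneg:
  fixes K :: "'a \<Rightarrow> 'a \<Rightarrow> complex"
  assumes "finite T" "c \<in> T"
    and psd: "\<And>w. 0 \<le> (\<Sum>x\<in>T. \<Sum>y\<in>T. cnj (w x) * K x y * w y)"
  shows "0 \<le> K c c"
proof -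
  define v where "v z = (if z = c then 1 else (0::complex))" for z
  have "cnj (v x) * K x y * v y = (if x = c then if y = c then K c c else 0 else 0)" for x y
    by (simp add: v_def)
  then have "(\<Sum>x\<in>T. \<Sum>y\<in>T. cnj (v x) * K x y * v y)
      = (\<Sum>x\<in>T. if x = c then \<Sum>y\<in>T. if y = c then K c c else 0 else 0)"
    by (intro sum.cong) auto
  also have "\<dots> = K c c" using assms(1,2) by simp
  finally show ?thesis using psd[of v] by simp
qed

lemma complex_divide_nonneg: "0 \<le> (x::complex) \<Longrightarrow> 0 < t \<Longrightarrow> 0 \<le> x / t"
  by (auto simp: less_eq_complex_def less_complex_def complex_eq_iff divide_complex_def)

lemma Dens_off_cfg: "\<rho> \<in> Dens d X \<Longrightarrow> a \<notin> cfg d X \<or> b \<notin> cfg d X \<Longrightarrow> \<rho> a b = 0"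
  and Dens_psd: "\<rho> \<in> Dens d X \<Longrightarrow> 0 \<le> (\<Sum>a\<in>cfg d X. \<Sum>b\<in>cfg d X. cnj (v a) * \<rho> a b * v b)"
  and Dens_trace: "\<rho> \<in> Dens d X \<Longrightarrow> (\<Sum>a\<in>cfg d X. \<rho> a a) = 1"
  unfolding Dens_def is_density_def by auto

lemma Dens_diag_nonzero:
  assumes "\<rho> \<in> Dens d X"
  obtains e where "e \<in> cfg d X" "\<rho> e e \<noteq> 0"
  using Dens_trace[OF assms] sum.neutral[of "cfg d X" "\<lambda>a. \<rho> a a"] by fastforce

lemma finite_Lset: "finite (Lset n)"
  unfolding Lset_def by simp

lemma PI_partition_on: "\<xi> \<in> PI n \<Longrightarrow> partition_on (Lset n) \<xi>"
  unfolding PI_def by blast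

lemma PI_finite_blocks: "\<xi> \<in> PI n \<Longrightarrow> finite \<xi>"
  using finite_elements[OF finite_Lset] PI_partition_on by blast

lemma finite_PI: "finite (PI n)"
  unfolding PI_def using finitely_many_partition_on[OF finite_Lset] .

lemma unc_Dens: "\<rho> \<in> unc d n \<xi> \<Longrightarrow> \<rho> \<in> Dens d (Lset n)"
  unfolding unc_def by blast

definition has_block_factors :: "(nat \<Rightarrow> nat) \<Rightarrow> nat \<Rightarrow> nat set set \<Rightarrow> op \<Rightarrow> (nat set \<Rightarrow> op) \<Rightarrow> bool" where
  "has_block_factors d n \<xi> \<rho> r \<longleftrightarrow> (\<forall>a\<in>cfg d (Lset n). \<forall>b\<in>cfg d (Lset n).
      \<rho> a b = (\<Prod>X\<in>\<xi>. r X (restrict a X) (restrict b X)))"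

lemma unc_has_block_factors: "\<rho> \<in> unc d n \<xi> \<Longrightarrow> \<exists>r. has_block_factors d n \<xi> \<rho> r"
  unfolding unc_def has_block_factors_def by auto

lemma has_block_factors_override_on:
  assumes \<xi>: "\<xi> \<in> PI n" and A: "A \<in> \<xi>" and r: "has_block_factors d n \<xi> \<rho> r"
    and cfg: "a \<in> cfg d (Lset n)" "b \<in> cfg d (Lset n)" "a' \<in> cfg d (Lset n)" "b' \<in> cfg d (Lset n)"
  shows "\<rho> (override_on a' a A) (override_on b' b A) =
           r A (restrict a A) (restrict b A) * (\<Prod>Y\<in>\<xi> - {A}. r Y (restrict a' Y) (restrict b' Y))"
proof -
  have P: "partition_on (Lset n) \<xi>" using \<xi> by (rule PI_partition_on)
  have "A \<subseteq> Lset n" using partition_on_block_subset[OF P A] .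
  then have "override_on a' a A \<in> cfg d (Lset n)" "override_on b' b A \<in> cfg d (Lset n)"
    using override_on_cfg_cfg cfg by blast+
  then have "\<rho> (override_on a' a A) (override_on b' b A) =
      (\<Prod>X\<in>\<xi>. r X (restrict (override_on a' a A) X) (restrict (override_on b' b A) X))"
    using r unfolding has_block_factors_def by blast
  also have "\<dots> = r A (restrict a A) (restrict b A) *
      (\<Prod>X\<in>\<xi> - {A}. r X (restrict (override_on a' a A) X) (restrict (override_on b' b A) X))"
    by (simp add: prod.remove[OF PI_finite_blocks[OF \<xi>] A] restrict_override_on)
  also have "(\<Prod>X\<in>\<xi> - {A}. r X (restrict (override_on a' a A) X) (restrict (override_on b' b A) X)) =
      (\<Prod>Y\<in>\<xi> - {A}. r Y (restrict a' Y) (restrict b' Y))"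
  proof (rule prod.cong[OF refl])
    fix Y assume "Y \<in> \<xi> - {A}"
    then have "Y \<inter> A = {}" using partition_on_block_eq[OF P _ A] by blast
    then show "r Y (restrict (override_on a' a A) Y) (restrict (override_on b' b A) Y) =
        r Y (restrict a' Y) (restrict b' Y)"
      by (simp add: restrict_override_on_disjoint)
  qed
  finally show ?thesis .
qed

lemma has_block_factors_swap:
  assumes \<xi>: "\<xi> \<in> PI n" and A: "A \<in> \<xi>" and r: "has_block_factors d n \<xi> \<rho> r"
    and cfg: "a \<in> cfg d (Lset n)" "b \<in> cfg d (Lset n)" "a' \<in> cfg d (Lset n)" "b' \<in> cfg d (Lset n)"
  shows "\<rho> (override_on a' a A) (override_on b' b A) * \<rho> (override_on a a' A) (override_on b b' A)
           = \<rho> a b * \<rho> a' b'"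
proof -
  note split = has_block_factors_override_on[OF \<xi> A r]
  have "\<rho> a b = \<rho> (override_on a a A) (override_on b b A)" by (simp add: override_on_self)
  also have "\<dots> = r A (restrict a A) (restrict b A) * (\<Prod>Y\<in>\<xi>-{A}. r Y (restrict a Y) (restrict b Y))"
    using split[OF cfg(1,2,1,2)] .
  finally have ab: "\<rho> a b = \<dots>" .
  have "\<rho> a' b' = \<rho> (override_on a' a' A) (override_on b' b' A)" by (simp add: override_on_self)
  also have "\<dots> = r A (restrict a' A) (restrict b' A) * (\<Prod>Y\<in>\<xi>-{A}. r Y (restrict a' Y) (restrict b' Y))"
    using split[OF cfg(3,4,3,4)] .
  finally have ab': "\<rho> a' b' = \<dots>" .
  show ?thesis
    using ab ab' split[OF cfg] split[OF cfg(3,4,1,2)] by (simp add: algebra_simps)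
qed

definition factorizes_at :: "(nat \<Rightarrow> nat) \<Rightarrow> nat \<Rightarrow> (nat \<Rightarrow> nat) \<Rightarrow> nat set set \<Rightarrow> op \<Rightarrow> bool" where
  "factorizes_at d n e \<xi> G \<longleftrightarrow> (\<forall>a\<in>cfg d (Lset n). \<forall>b\<in>cfg d (Lset n).
      G a b = (\<Prod>X\<in>\<xi>. G (override_on e a X) (override_on e b X)))"

lemma has_block_factors_factorizes_at:
  assumes \<xi>: "\<xi> \<in> PI n" and r: "has_block_factors d n \<xi> \<rho> r"
    and e: "e \<in> cfg d (Lset n)" and E: "\<rho> e e \<noteq> 0"
  shows "factorizes_at d n e \<xi> (\<lambda>a b. \<rho> a b / \<rho> e e)"
  unfolding factorizes_at_def
proof (intro ballI)
  fix a b assume a: "a \<in> cfg d (Lset n)" and b: "b \<in> cfg d (Lset n)"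
  let ?R = "\<lambda>X. r X (restrict e X) (restrict e X)"
  have "\<rho> (override_on e a X) (override_on e b X) / \<rho> e e = r X (restrict a X) (restrict b X) / ?R X"
    if X: "X \<in> \<xi>" for X
  proof -
    note split = has_block_factors_override_on[OF \<xi> X r]
    have "\<rho> e e = ?R X * (\<Prod>Y\<in>\<xi>-{X}. r Y (restrict e Y) (restrict e Y))"
      using split[OF e e e e] by (simp add: override_on_self)
    then show ?thesis using split[OF a b e e] E by (simp add: field_simps)
  qed
  then have "(\<Prod>X\<in>\<xi>. \<rho> (override_on e a X) (override_on e b X) / \<rho> e e)
      = (\<Prod>X\<in>\<xi>. r X (restrict a X) (restrict b X)) / (\<Prod>X\<in>\<xi>. ?R X)"
    by (simp add: prod_dividef)
  also have "\<dots> = \<rho> a b / \<rho> e e"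
    using r a b e unfolding has_block_factors_def by simp
  finally show "\<rho> a b / \<rho> e e = (\<Prod>X\<in>\<xi>. \<rho> (override_on e a X) (override_on e b X) / \<rho> e e)"
    by simp
qed

lemma factorizes_at_meet:
  assumes \<xi>: "\<xi> \<in> PI n" and \<eta>: "\<eta> \<in> PI n" and e: "e \<in> cfg d (Lset n)" and "G e e = 1"
    and G\<xi>: "factorizes_at d n e \<xi> G" and G\<eta>: "factorizes_at d n e \<eta> G"
  shows "factorizes_at d n e (meet \<xi> \<eta>) G"
  unfolding factorizes_at_def
proof (intro ballI)
  fix a b assume a: "a \<in> cfg d (Lset n)" and b: "b \<in> cfg d (Lset n)"
  define F where "F Z = G (override_on e a Z) (override_on e b Z)" for Z
  have "G a b = (\<Prod>X\<in>\<xi>. F X)"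
    using G\<xi> a b unfolding factorizes_at_def F_def by blast
  also have "\<dots> = (\<Prod>X\<in>\<xi>. \<Prod>Y\<in>\<eta>. F (X \<inter> Y))"
  proof (rule prod.cong[OF refl])
    fix X assume "X \<in> \<xi>"
    then have "X \<subseteq> Lset n" using partition_on_block_subset PI_partition_on[OF \<xi>] by blast
    then have "override_on e a X \<in> cfg d (Lset n)" "override_on e b X \<in> cfg d (Lset n)"
      using override_on_cfg_cfg a b e by blast+
    with G\<eta> have "F X = (\<Prod>Y\<in>\<eta>.
        G (override_on e (override_on e a X) Y) (override_on e (override_on e b X) Y))"
      unfolding factorizes_at_def F_def by blast
    then show "F X = (\<Prod>Y\<in>\<eta>. F (X \<inter> Y))"
      unfolding F_def by (simp only: override_on_override_on)
  qed
  also have "\<dots> = prod F (meet \<xi> \<eta>)"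
    using PI_partition_on[OF \<xi>] PI_partition_on[OF \<eta>] PI_finite_blocks[OF \<xi>] PI_finite_blocks[OF \<eta>]
    by (rule prod_meet) (simp add: F_def \<open>G e e = 1\<close>)
  finally show "G a b = (\<Prod>Z\<in>meet \<xi> \<eta>. G (override_on e a Z) (override_on e b Z))"
    unfolding F_def .
qed

definition slice :: "(nat \<Rightarrow> nat) \<Rightarrow> (nat \<Rightarrow> nat) \<Rightarrow> op \<Rightarrow> nat set \<Rightarrow> op" where
  "slice d e \<rho> Z a b =
     (if a \<in> cfg d Z \<and> b \<in> cfg d Z
      then \<rho> (override_on e a Z) (override_on e b Z) /
             (\<Sum>c\<in>cfg d Z. \<rho> (override_on e c Z) (override_on e c Z))
      else 0)"

lemma slice_normalizer_pos:
  assumes D: "\<rho> \<in> Dens d L" and "finite L" "Z \<subseteq> L"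
    and e: "e \<in> cfg d L" and E: "\<rho> e e \<noteq> 0"
  shows "0 < (\<Sum>c\<in>cfg d Z. \<rho> (override_on e c Z) (override_on e c Z))"
proof -
  have finL: "finite (cfg d L)" and finZ: "finite (cfg d Z)"
    using finite_cfg assms(2,3) finite_subset by blast+
  have diag: "0 \<le> \<rho> c c" if "c \<in> cfg d L" for c
    using psd_form_diag_nonneg[OF finL that] Dens_psd[OF D] by blast
  have nonneg: "\<rho> (override_on e c Z) (override_on e c Z) \<ge> 0" if "c \<in> cfg d Z" for c
    using diag override_on_cfg_sub[OF that e assms(3)] by blast
  have "\<rho> (override_on e (restrict e Z) Z) (override_on e (restrict e Z) Z)
      \<le> (\<Sum>c\<in>cfg d Z. \<rho> (override_on e c Z) (override_on e c Z))"
    by (rule member_le_sum[OF restrict_cfg[OF e assms(3)] _ finZ]) (use nonneg in blast)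
  then have "\<rho> e e \<le> (\<Sum>c\<in>cfg d Z. \<rho> (override_on e c Z) (override_on e c Z))"
    by (simp only: override_on_restrict override_on_self)
  then show ?thesis
    using diag[OF e] E by (metis order.not_eq_order_implies_strict order.strict_trans2)
qed

lemma slice_Dens:
  assumes D: "\<rho> \<in> Dens d L" and "finite L" "Z \<subseteq> L"
    and e: "e \<in> cfg d L" and E: "\<rho> e e \<noteq> 0"
  shows "slice d e \<rho> Z \<in> Dens d Z"
proof -
  define s where "s a b = \<rho> (override_on e a Z) (override_on e b Z)" for a b
  define t where "t = (\<Sum>c\<in>cfg d Z. s c c)"
  have t: "0 < t"
    unfolding t_def s_def by (rule slice_normalizer_pos[of \<rho> d L Z e, OF D assms(2,3) e E])
  have finL: "finite (cfg d L)" using finite_cfg assms(2) by blast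
  have into: "(\<lambda>a. override_on e a Z) ` cfg d Z \<subseteq> cfg d L"
    using override_on_cfg_sub[OF _ e assms(3)] by blast
  have "inj_on (\<lambda>a. override_on e a Z) (cfg d Z)"
    by (rule inj_onI) (metis PiE_restrict cfg_def restrict_override_on)
  then have s_psd: "0 \<le> (\<Sum>a\<in>cfg d Z. \<Sum>b\<in>cfg d Z. cnj (v a) * s a b * v b)" for v
    unfolding s_def using psd_form_reindex[OF finL into] Dens_psd[OF D] by blast
  show ?thesis
    unfolding Dens_def is_density_def mem_Collect_eq
  proof (intro conjI allI impI)
    show "slice d e \<rho> Z a b = 0" if "a \<notin> cfg d Z \<or> b \<notin> cfg d Z" for a b
      using that unfolding slice_def by auto
    fix v :: "(nat \<Rightarrow> nat) \<Rightarrow> complex"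
    have "(\<Sum>a\<in>cfg d Z. \<Sum>b\<in>cfg d Z. cnj (v a) * slice d e \<rho> Z a b * v b)
        = (\<Sum>a\<in>cfg d Z. \<Sum>b\<in>cfg d Z. cnj (v a) * s a b * v b) / t"
      unfolding sum_divide_distrib slice_def s_def t_def by (intro sum.cong) auto
    then show "0 \<le> (\<Sum>a\<in>cfg d Z. \<Sum>b\<in>cfg d Z. cnj (v a) * slice d e \<rho> Z a b * v b)"
      using complex_divide_nonneg[OF s_psd t] by simp
  next
    have "(\<Sum>a\<in>cfg d Z. slice d e \<rho> Z a a) = t / t"
      unfolding sum_divide_distrib slice_def s_def t_def by (rule sum.cong) auto
    then show "(\<Sum>a\<in>cfg d Z. slice d e \<rho> Z a a) = 1" using t by simp
  qed
qed

lemma slice_restrict: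
  assumes "a \<in> cfg d L" "b \<in> cfg d L" "Z \<subseteq> L"
  shows "slice d e \<rho> Z (restrict a Z) (restrict b Z) =
           \<rho> (override_on e a Z) (override_on e b Z) /
           (\<Sum>c\<in>cfg d Z. \<rho> (override_on e c Z) (override_on e c Z))"
  using restrict_cfg[OF assms(1,3)] restrict_cfg[OF assms(2,3)]
  unfolding slice_def by (simp add: override_on_restrict)

text \<open>The block factors are the normalized slices of \<open>\<rho>\<close> through \<open>e\<close>.\<close>
lemma factorizes_at_unc:
  assumes \<zeta>: "\<zeta> \<in> PI n" and D: "\<rho> \<in> Dens d (Lset n)"
    and e: "e \<in> cfg d (Lset n)" and E: "\<rho> e e \<noteq> 0"
    and fac: "factorizes_at d n e \<zeta> (\<lambda>a b. \<rho> a b / \<rho> e e)"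
  shows "\<rho> \<in> unc d n \<zeta>"
proof -
  have P: "partition_on (Lset n) \<zeta>" using \<zeta> by (rule PI_partition_on)
  note ZL = partition_on_block_subset[OF P]
  define t where "t Z = (\<Sum>c\<in>cfg d Z. \<rho> (override_on e c Z) (override_on e c Z))" for Z
  have ratio: "\<rho> a b / \<rho> e e = (\<Prod>Z\<in>\<zeta>. t Z / \<rho> e e * slice d e \<rho> Z (restrict a Z) (restrict b Z))"
    if "a \<in> cfg d (Lset n)" "b \<in> cfg d (Lset n)" for a b
  proof -
    have "0 < t Z" if "Z \<in> \<zeta>" for Z
      unfolding t_def by (rule slice_normalizer_pos[of \<rho> d "Lset n" Z e, OF D finite_Lset ZL[OF that] e E])
    then have "t Z \<noteq> 0" if "Z \<in> \<zeta>" for Z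
      using that by (metis less_irrefl)
    then show ?thesis
      using fac that unfolding factorizes_at_def
      by (auto simp: slice_restrict[OF that ZL] t_def intro!: prod.cong)
  qed
  have "1 / \<rho> e e = (\<Sum>a\<in>cfg d (Lset n). \<rho> a a / \<rho> e e)"
    by (simp add: sum_divide_distrib[symmetric] Dens_trace[OF D])
  also have "\<dots> = (\<Sum>a\<in>cfg d (Lset n). \<Prod>Z\<in>\<zeta>. t Z / \<rho> e e * slice d e \<rho> Z (restrict a Z) (restrict a Z))"
    using ratio by (rule sum.cong[OF refl])
  also have "\<dots> = (\<Prod>Z\<in>\<zeta>. \<Sum>c\<in>cfg d Z. t Z / \<rho> e e * slice d e \<rho> Z c c)"
    by (rule sum_cfg_prod_blocks[OF P finite_Lset])
  also have "\<dots> = (\<Prod>Z\<in>\<zeta>. t Z / \<rho> e e * (\<Sum>c\<in>cfg d Z. slice d e \<rho> Z c c))"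
    by (simp only: sum_distrib_left)
  also have "\<dots> = (\<Prod>Z\<in>\<zeta>. t Z / \<rho> e e)"
    using Dens_trace[OF slice_Dens[of \<rho> d "Lset n" _ e, OF D finite_Lset ZL e E]]
    by (intro prod.cong) simp_all
  finally have trace: "(\<Prod>Z\<in>\<zeta>. t Z / \<rho> e e) = 1 / \<rho> e e" ..
  have "\<rho> a b = (\<Prod>Z\<in>\<zeta>. slice d e \<rho> Z (restrict a Z) (restrict b Z))"
    if "a \<in> cfg d (Lset n)" "b \<in> cfg d (Lset n)" for a b
  proof -
    have "\<rho> a b / \<rho> e e = (\<Prod>Z\<in>\<zeta>. t Z / \<rho> e e) * (\<Prod>Z\<in>\<zeta>. slice d e \<rho> Z (restrict a Z) (restrict b Z))"
      using ratio[OF that] by (simp only: prod.distrib)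
    then show ?thesis using trace E by (simp add: field_simps)
  qed
  then show ?thesis
    unfolding unc_def
    using D Dens_off_cfg[OF D] slice_Dens[of \<rho> d "Lset n" _ e, OF D finite_Lset ZL e E]
    by (auto intro!: exI[of _ "slice d e \<rho>"])
qed

lemma unc_meet:
  assumes \<xi>: "\<xi> \<in> PI n" and \<eta>: "\<eta> \<in> PI n" and "\<rho> \<in> unc d n \<xi>" "\<rho> \<in> unc d n \<eta>"
  shows "\<rho> \<in> unc d n (meet \<xi> \<eta>)"
proof -
  obtain r r' where r: "has_block_factors d n \<xi> \<rho> r" and r': "has_block_factors d n \<eta> \<rho> r'"
    using unc_has_block_factors assms(3,4) by blast
  have D: "\<rho> \<in> Dens d (Lset n)" using unc_Dens assms(3) .
  obtain e where e: "e \<in> cfg d (Lset n)" and E: "\<rho> e e \<noteq> 0"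
    using Dens_diag_nonzero[OF D] .
  have "meet \<xi> \<eta> \<in> PI n"
    using partition_on_meet PI_partition_on[OF \<xi>] PI_partition_on[OF \<eta>] unfolding PI_def by blast
  moreover have "factorizes_at d n e (meet \<xi> \<eta>) (\<lambda>a b. \<rho> a b / \<rho> e e)"
  proof (rule factorizes_at_meet[OF \<xi> \<eta> e])
    show "\<rho> e e / \<rho> e e = 1" using E by simp
    show "factorizes_at d n e \<xi> (\<lambda>a b. \<rho> a b / \<rho> e e)"
      by (rule has_block_factors_factorizes_at[of \<xi> n d \<rho> r e, OF \<xi> r e E])
    show "factorizes_at d n e \<eta> (\<lambda>a b. \<rho> a b / \<rho> e e)"
      by (rule has_block_factors_factorizes_at[of \<eta> n d \<rho> r' e, OF \<eta> r' e E])
  qed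
  ultimately show ?thesis using factorizes_at_unc D e E by blast
qed

lemma finest_unc_partition:
  assumes "\<xi> \<in> PI n" "\<rho> \<in> unc d n \<xi>"
  obtains \<mu> where "\<mu> \<in> PI n" "\<rho> \<in> unc d n \<mu>"
    "\<And>\<xi>. \<xi> \<in> PI n \<Longrightarrow> \<rho> \<in> unc d n \<xi> \<Longrightarrow> refines \<mu> \<xi>"
proof -
  define U where "U = {\<xi> \<in> PI n. \<rho> \<in> unc d n \<xi>}"
  have "\<exists>\<mu>\<in>U. \<forall>\<xi>\<in>F. refines \<mu> \<xi>" if "finite F" "F \<noteq> {}" "F \<subseteq> U" for F
    using that
  proof (induction F rule: finite_ne_induct)
    case (singleton \<xi>)
    then show ?case using refines_refl by blast
  next
    case (insert \<xi> F)
    then obtain \<mu> where "\<mu> \<in> U" "\<forall>\<eta>\<in>F. refines \<mu> \<eta>" by auto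
    moreover have "meet \<xi> \<mu> \<in> U"
      using insert.prems \<open>\<mu> \<in> U\<close> unc_meet partition_on_meet
      unfolding U_def PI_def by auto
    ultimately show ?case
      using meet_refines[of \<xi> \<mu>] refines_trans by blast
  qed
  moreover have "finite U" "U \<noteq> {}"
    using finite_PI assms unfolding U_def by auto
  ultimately obtain \<mu> where "\<mu> \<in> U" "\<forall>\<xi>\<in>U. refines \<mu> \<xi>" by blast
  then show ?thesis using that unfolding U_def by blast
qed

lemma Cunc_mem_imp_downsets_containing:
  assumes X: "\<Xi> \<in> PIII n" and \<rho>: "\<rho> \<in> Cunc d n \<Xi>"
  shows "\<exists>\<mu>\<in>PI n. \<Xi> = downsets_containing n \<mu>"
proof -
  have XP: "\<Xi> \<subseteq> PII n" and "\<Xi> \<noteq> {}" using X PIII_def by auto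
  have Sunc_iff: "\<rho> \<in> Sunc d n S \<longleftrightarrow> (\<exists>\<xi>\<in>S. \<rho> \<in> unc d n \<xi>)" for S
    unfolding Sunc_def by blast
  have mem: "S \<in> \<Xi> \<longleftrightarrow> \<rho> \<in> Sunc d n S" if "S \<in> PII n" for S
    using \<rho> that unfolding Cunc_def by blast
  obtain S \<xi> where "S \<in> \<Xi>" "\<xi> \<in> S" "\<rho> \<in> unc d n \<xi>"
    using \<open>\<Xi> \<noteq> {}\<close> mem XP Sunc_iff by blast
  moreover have "\<xi> \<in> PI n" using calculation XP unfolding PII_def by blast
  ultimately obtain \<mu> where \<mu>: "\<mu> \<in> PI n" "\<rho> \<in> unc d n \<mu>"
    and finest: "\<And>\<xi>. \<xi> \<in> PI n \<Longrightarrow> \<rho> \<in> unc d n \<xi> \<Longrightarrow> refines \<mu> \<xi>"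
    using finest_unc_partition by metis
  have "S \<in> \<Xi> \<longleftrightarrow> \<mu> \<in> S" if S: "S \<in> PII n" for S
  proof -
    have "(\<exists>\<xi>\<in>S. \<rho> \<in> unc d n \<xi>) \<longleftrightarrow> \<mu> \<in> S"
      using S \<mu> finest unfolding PII_def by blast
    then show ?thesis using mem[OF S] Sunc_iff by blast
  qed
  then show ?thesis
    using \<mu>(1) XP unfolding downsets_containing_def by blast
qed

definition uniform_cfg :: "nat \<Rightarrow> nat set \<Rightarrow> (nat \<Rightarrow> nat)" where
  "uniform_cfg k X = (\<lambda>i\<in>X. k)"

definition ghz :: "nat set \<Rightarrow> (nat \<Rightarrow> nat) \<Rightarrow> complex" where
  "ghz X a = (if a = uniform_cfg 0 X \<or> a = uniform_cfg 1 X then of_real (1 / sqrt 2) else 0)"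

definition product_ghz :: "nat set set \<Rightarrow> (nat \<Rightarrow> nat) \<Rightarrow> complex" where
  "product_ghz \<mu> a = (\<Prod>X\<in>\<mu>. ghz X (restrict a X))"

definition pure_state :: "(nat \<Rightarrow> nat) \<Rightarrow> nat set \<Rightarrow> ((nat \<Rightarrow> nat) \<Rightarrow> complex) \<Rightarrow> op" where
  "pure_state d X f a b = (if a \<in> cfg d X \<and> b \<in> cfg d X then f a * cnj (f b) else 0)"

lemma cnj_mult_self_nonneg: "0 \<le> cnj z * z"
proof -
  have "cnj z * z = of_real (norm z ^ 2)" by (metis complex_norm_square mult.commute)
  then show ?thesis by (simp add: less_eq_complex_def)
qed

lemma pure_state_Dens:
  assumes "(\<Sum>a\<in>cfg d X. f a * cnj (f a)) = 1"
  shows "pure_state d X f \<in> Dens d X"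
  unfolding Dens_def is_density_def mem_Collect_eq
proof (intro conjI allI impI)
  show "pure_state d X f a b = 0" if "a \<notin> cfg d X \<or> b \<notin> cfg d X" for a b
    using that unfolding pure_state_def by auto
  fix v :: "(nat \<Rightarrow> nat) \<Rightarrow> complex"
  define T where "T = (\<Sum>b\<in>cfg d X. cnj (f b) * v b)"
  have "(\<Sum>a\<in>cfg d X. \<Sum>b\<in>cfg d X. cnj (v a) * pure_state d X f a b * v b) =
        (\<Sum>a\<in>cfg d X. cnj (v a) * f a) * T"
    unfolding T_def pure_state_def sum_product by (intro sum.cong) (auto simp: algebra_simps)
  also have "(\<Sum>a\<in>cfg d X. cnj (v a) * f a) = cnj T"
    unfolding T_def cnj_sum by (rule sum.cong) (simp_all add: mult.commute)
  finally show "0 \<le> (\<Sum>a\<in>cfg d X. \<Sum>b\<in>cfg d X. cnj (v a) * pure_state d X f a b * v b)"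
    using cnj_mult_self_nonneg by simp
next
  show "(\<Sum>a\<in>cfg d X. pure_state d X f a a) = 1"
    using assms unfolding pure_state_def by simp
qed

lemma uniform_cfg_cfg: "(\<forall>i\<in>X. k < d i) \<Longrightarrow> uniform_cfg k X \<in> cfg d X"
  unfolding uniform_cfg_def cfg_def by auto

lemma uniform_cfg_inj: "X \<noteq> {} \<Longrightarrow> uniform_cfg k X = uniform_cfg l X \<longleftrightarrow> k = l"
  unfolding uniform_cfg_def by (metis ex_in_conv restrict_apply')

lemma ghz_norm:
  assumes "\<forall>i\<in>X. 1 < d i" "X \<noteq> {}" "finite X"
  shows "(\<Sum>a\<in>cfg d X. ghz X a * cnj (ghz X a)) = 1"
proof -
  have "(\<Sum>a\<in>cfg d X. ghz X a * cnj (ghz X a))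
      = (\<Sum>a\<in>cfg d X. if a \<in> {uniform_cfg 0 X, uniform_cfg 1 X} then 1 / 2 else 0)"
    by (intro sum.cong) (auto simp: ghz_def simp flip: of_real_mult)
  also have "\<dots> = (\<Sum>a\<in>cfg d X \<inter> {uniform_cfg 0 X, uniform_cfg 1 X}. 1 / 2)"
    by (rule sum.inter_restrict[OF finite_cfg[OF assms(3)], symmetric])
  also have "cfg d X \<inter> {uniform_cfg 0 X, uniform_cfg 1 X} = {uniform_cfg 0 X, uniform_cfg 1 X}"
    using assms(1) uniform_cfg_cfg[of X 0 d] uniform_cfg_cfg[of X 1 d] by force
  also have "(\<Sum>a\<in>{uniform_cfg 0 X, uniform_cfg 1 X}. 1 / 2 :: complex) = 1"
    using uniform_cfg_inj[OF assms(2), of 0 1] by simp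
  finally show ?thesis .
qed

lemma product_ghz_nonzero_iff:
  "finite \<mu> \<Longrightarrow> product_ghz \<mu> a \<noteq> 0 \<longleftrightarrow>
     (\<forall>X\<in>\<mu>. restrict a X = uniform_cfg 0 X \<or> restrict a X = uniform_cfg 1 X)"
  unfolding product_ghz_def ghz_def by simp

lemma product_ghz_norm:
  assumes \<mu>: "\<mu> \<in> PI n" and d: "\<forall>i\<in>Lset n. 1 < d i"
  shows "(\<Sum>a\<in>cfg d (Lset n). product_ghz \<mu> a * cnj (product_ghz \<mu> a)) = 1"
proof -
  have P: "partition_on (Lset n) \<mu>" using \<mu> by (rule PI_partition_on)
  have "(\<Sum>a\<in>cfg d (Lset n). product_ghz \<mu> a * cnj (product_ghz \<mu> a))
      = (\<Sum>a\<in>cfg d (Lset n). \<Prod>X\<in>\<mu>. ghz X (restrict a X) * cnj (ghz X (restrict a X)))"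
    unfolding product_ghz_def cnj_prod prod.distrib ..
  also have "\<dots> = (\<Prod>X\<in>\<mu>. \<Sum>b\<in>cfg d X. ghz X b * cnj (ghz X b))"
    by (rule sum_cfg_prod_blocks[OF P finite_Lset])
  also have "\<dots> = 1"
    using d partition_on_block_subset[OF P] partition_on_block_nonempty[OF P]
      finite_subset[OF _ finite_Lset] by (intro prod.neutral ballI ghz_norm) blast+
  finally show ?thesis .
qed

lemma pure_state_product_ghz_unc:
  assumes \<mu>: "\<mu> \<in> PI n" and d: "\<forall>i\<in>Lset n. 1 < d i"
  shows "pure_state d (Lset n) (product_ghz \<mu>) \<in> unc d n \<mu>"
proof -
  have P: "partition_on (Lset n) \<mu>" using \<mu> by (rule PI_partition_on)
  have blocks: "pure_state d X (ghz X) \<in> Dens d X" if "X \<in> \<mu>" for X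
    using d partition_on_block_subset[OF P that] partition_on_block_nonempty[OF P that]
      finite_subset[OF _ finite_Lset] by (intro pure_state_Dens ghz_norm) blast+
  have "pure_state d (Lset n) (product_ghz \<mu>) a b
      = (\<Prod>X\<in>\<mu>. pure_state d X (ghz X) (restrict a X) (restrict b X))"
    if "a \<in> cfg d (Lset n)" "b \<in> cfg d (Lset n)" for a b
    using that restrict_cfg partition_on_block_subset[OF P]
    by (simp add: pure_state_def product_ghz_def prod.distrib)
  then show ?thesis
    unfolding unc_def
    using pure_state_Dens[OF product_ghz_norm[OF \<mu> d]] blocks
    by (auto intro!: exI[of _ "\<lambda>X. pure_state d X (ghz X)"] simp: pure_state_def)
qed

text \<open>If a block \<open>X\<close> of \<open>\<mu>\<close> meets two blocks of \<open>\<xi>\<close>, exchanging the all-zero and the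
  all-one configuration on \<open>X\<close> outside one of them leaves the support of the GHZ product,
  contradicting the swap identity of \<open>\<xi>\<close>-uncorrelated states.\<close>
lemma pure_state_product_ghz_unc_refines:
  assumes \<mu>: "\<mu> \<in> PI n" and d: "\<forall>i\<in>Lset n. 1 < d i" and \<xi>: "\<xi> \<in> PI n"
    and unc: "pure_state d (Lset n) (product_ghz \<mu>) \<in> unc d n \<xi>"
  shows "refines \<mu> \<xi>"
proof (rule ccontr)
  assume "\<not> refines \<mu> \<xi>"
  then obtain X where X: "X \<in> \<mu>" and not_sub: "\<forall>Y\<in>\<xi>. \<not> X \<subseteq> Y" unfolding refines_def by blast
  have P: "partition_on (Lset n) \<mu>" using \<mu> by (rule PI_partition_on)
  have Q: "partition_on (Lset n) \<xi>" using \<xi> by (rule PI_partition_on)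
  have XL: "X \<subseteq> Lset n" using partition_on_block_subset[OF P X] .
  obtain i where i: "i \<in> X" using partition_on_block_nonempty[OF P X] by blast
  define A where "A = block_of \<xi> i"
  have A: "A \<in> \<xi>" "i \<in> A" using block_of[OF Q] i XL unfolding A_def by auto
  obtain j where j: "j \<in> X" "j \<notin> A" using not_sub A by blast
  define z0 where "z0 = uniform_cfg 0 (Lset n)"
  define z1 where "z1 = (\<lambda>k\<in>Lset n. if k \<in> X then 1 else 0::nat)"
  have z: "z0 \<in> cfg d (Lset n)" "z1 \<in> cfg d (Lset n)"
    using d unfolding z0_def z1_def uniform_cfg_def cfg_def by auto
  define \<rho> where "\<rho> = pure_state d (Lset n) (product_ghz \<mu>)"
  obtain r where r: "has_block_factors d n \<xi> \<rho> r"
    using unc_has_block_factors unc unfolding \<rho>_def by blast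
  have fin: "finite \<mu>" using PI_finite_blocks[OF \<mu>] .
  have restrict_z: "restrict z0 Y = uniform_cfg 0 Y"
    "restrict z1 Y = uniform_cfg (if Y = X then 1 else 0) Y" if "Y \<in> \<mu>" for Y
    using partition_on_block_subset[OF P that] partition_on_block_eq[OF P that X]
    unfolding z0_def z1_def uniform_cfg_def by (auto simp: fun_eq_iff)
  have "product_ghz \<mu> z0 \<noteq> 0" "product_ghz \<mu> z1 \<noteq> 0"
    using restrict_z by (simp_all add: product_ghz_nonzero_iff[OF fin])
  then have "\<rho> z0 z0 * \<rho> z1 z1 \<noteq> 0"
    using z unfolding \<rho>_def pure_state_def by simp
  moreover
  define m where "m = override_on z1 z0 A"
  have "m i = 0" "m j = 1"
    using A j i XL unfolding m_def z0_def z1_def uniform_cfg_def by auto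
  then have "restrict m X \<noteq> uniform_cfg 0 X" "restrict m X \<noteq> uniform_cfg 1 X"
    using i j unfolding uniform_cfg_def by (metis restrict_apply' zero_neq_one)+
  then have "\<rho> m m = 0"
    using X product_ghz_nonzero_iff[OF fin, of m] unfolding \<rho>_def pure_state_def by auto
  then have "\<rho> z0 z0 * \<rho> z1 z1 = 0"
    using has_block_factors_swap[OF \<xi> A(1) r z(1,1,2,2)] unfolding m_def by simp
  ultimately show False by contradiction
qed

lemma pure_state_product_ghz_Cunc:
  assumes d: "\<forall>i\<in>Lset n. 1 < d i" and \<mu>: "\<mu> \<in> PI n" and \<Xi>: "\<Xi> = downsets_containing n \<mu>"
  shows "pure_state d (Lset n) (product_ghz \<mu>) \<in> Cunc d n \<Xi>"
proof -
  define \<rho> where "\<rho> = pure_state d (Lset n) (product_ghz \<mu>)"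
  have u: "\<rho> \<in> unc d n \<mu>" unfolding \<rho>_def using \<mu> d by (rule pure_state_product_ghz_unc)
  have "\<rho> \<in> Sunc d n S \<longleftrightarrow> \<mu> \<in> S" if S: "S \<in> PII n" for S
  proof
    assume "\<rho> \<in> Sunc d n S"
    then obtain \<xi> where "\<xi> \<in> S" "\<rho> \<in> unc d n \<xi>" unfolding Sunc_def by blast
    moreover have "\<xi> \<in> PI n" using S \<open>\<xi> \<in> S\<close> unfolding PII_def by blast
    ultimately show "\<mu> \<in> S"
      using pure_state_product_ghz_unc_refines[OF \<mu> d] S \<mu> unfolding \<rho>_def PII_def by blast
  qed (use u in \<open>auto simp: Sunc_def\<close>)
  then show ?thesis
    using unc_Dens[OF u] \<Xi> unfolding Cunc_def downsets_containing_def \<rho>_def by blast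
qed

theorem lemma5:
  fixes n :: nat and d :: "nat \<Rightarrow> nat" and \<Xi> :: "nat set set set set"
  assumes "n \<ge> 1"
    and "\<forall>i\<in>Lset n. 1 < d i"
    and "\<Xi> \<in> PIII n"
  shows "Cunc d n \<Xi> \<noteq> {} \<longleftrightarrow>
           (\<Xi> = {U \<in> PII n. \<Inter>\<Xi> \<subseteq> U} \<and>
            PII n - \<Xi> = {U \<in> PII n. U \<subseteq> \<Union>(PII n - \<Xi>)})"
proof -
  have "Cunc d n \<Xi> \<noteq> {} \<longleftrightarrow> (\<exists>\<mu>\<in>PI n. \<Xi> = downsets_containing n \<mu>)"
    using Cunc_mem_imp_downsets_containing[OF assms(3)] pure_state_product_ghz_Cunc[OF assms(2)]
    by blast
  also have "\<dots> \<longleftrightarrow> \<Xi> = {U \<in> PII n. \<Inter>\<Xi> \<subseteq> U} \<and> PII n - \<Xi> = {U \<in> PII n. U \<subseteq> \<Union>(PII n - \<Xi>)}"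
    using downsets_containing_imp_filter_conditions filter_conditions_imp_downsets_containing[OF assms(3)]
    by blast
  finally show ?thesis .
qed

end
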